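(* Let $f:\mathbb{R}^n\to\mathbb{R}$ be twice continuously differentiable with $L$-Lipschitz gradient. For a step size $0<\alpha<\frac1L$, the map $g_{\alpha f}=g_{\alpha f}^p\circ g_{\alpha f}^{p-1}\circ\cdots\circ g_{\alpha f}^1:\mathbb{R}^n\to\mathbb{R}^n$ is a diffeomorphism.
   Context: $\|\nabla f(x)-\nabla f(y)\|\le L\|x-y\|$ for all $x,y$, $L>0$. The variable is partitioned as $x=(x(1),\dots,x(p))$, $x(s)\in\mathbb{R}^{n_s}$, $\sum_s n_s=n$; $U_s\in\mathbb{R}^{n\times n_s}$ is the $s$-th block-column of $I_n$ and $\nabla_sf(x)=U_s^T\nabla f(x)$. For $\alpha>0$, $g_{\alpha f}^s(x)=x-\alpha U_s\nabla_s f(x)$, $s=1,\dots,p$. *)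

theory Defs
  imports "HOL-Analysis.Analysis"
begin

definition C1_map :: "('a::euclidean_space \<Rightarrow> 'b::euclidean_space) \<Rightarrow> bool" where
  "C1_map \<phi> \<longleftrightarrow> (\<exists>D :: 'a \<Rightarrow> ('a \<Rightarrow>\<^sub>L 'b).
      (\<forall>x. (\<phi> has_derivative blinfun_apply (D x)) (at x)) \<and> continuous_on UNIV D)"

definition diffeomorphism :: "('a::euclidean_space \<Rightarrow> 'a) \<Rightarrow> bool" where
  "diffeomorphism g \<longleftrightarrow> (\<exists>h. (\<forall>x. h (g x) = x) \<and> (\<forall>y. g (h y) = y) \<and> C1_map g \<and> C1_map h)"

text \<open>Block gradient step g^s_{alpha f}(x) = x - alpha U_s grad_s f(x), where the block s
is given by the index set B s and gradf is the gradient of f.\<close>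
definition block_step ::
  "real \<Rightarrow> (real^'n \<Rightarrow> real^'n) \<Rightarrow> ('n set) \<Rightarrow> real^'n \<Rightarrow> real^'n" where
  "block_step \<alpha> gradf Bs x = x - \<alpha> *\<^sub>R (\<chi> i. if i \<in> Bs then gradf x $ i else 0)"

text \<open>The composition g^p o ... o g^1 (blocks indexed 0,...,p-1; block 0 applied first).\<close>
definition block_map ::
  "real \<Rightarrow> (real^'n \<Rightarrow> real^'n) \<Rightarrow> nat \<Rightarrow> (nat \<Rightarrow> 'n set) \<Rightarrow> real^'n \<Rightarrow> real^'n" where
  "block_map \<alpha> gradf p B = fold (\<lambda>s h. block_step \<alpha> gradf (B s) \<circ> h) [0..<p] id"

end

theory Submission
  imports Defs
begin

text \<open>Each block step is a perturbation \<open>x - k x\<close> of the identity by \<open>k x = \<alpha> P (\<nabla>f x)\<close>,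
where \<open>P\<close> is the coordinate projection onto the block, so \<open>k\<close> is Lipschitz with constant
\<open>\<alpha> L < 1\<close>. The Banach fixed point theorem, applied to \<open>x \<mapsto> y + k x\<close>, makes such a map a
bijection with Lipschitz inverse. Its derivative \<open>I - Dk x\<close> satisfies \<open>\<parallel>Dk x\<parallel> \<le> \<alpha> L\<close>, hence is
invertible with an inverse depending continuously on \<open>x\<close>, and the inverse map is \<open>C\<^sup>1\<close>.
A composition of diffeomorphisms is again one.\<close>

lemma C1_map_id: "C1_map (id :: 'a::euclidean_space \<Rightarrow> 'a)"
  unfolding C1_map_def
  by (rule exI[of _ "\<lambda>_. id_blinfun"]) (auto simp: id_def)

lemma C1_map_compose:
  fixes f :: "'a::euclidean_space \<Rightarrow> 'b::euclidean_space" and g :: "'b \<Rightarrow> 'c::euclidean_space"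
  assumes "C1_map f" "C1_map g"
  shows "C1_map (g \<circ> f)"
proof -
  obtain Df where Df: "\<And>x. (f has_derivative blinfun_apply (Df x)) (at x)" "continuous_on UNIV Df"
    using assms(1) unfolding C1_map_def by blast
  obtain Dg where Dg: "\<And>x. (g has_derivative blinfun_apply (Dg x)) (at x)" "continuous_on UNIV Dg"
    using assms(2) unfolding C1_map_def by blast
  have f_cont: "continuous_on UNIV f"
    using Df(1) has_derivative_continuous continuous_at_imp_continuous_on by blast
  have "((g \<circ> f) has_derivative blinfun_apply (Dg (f x) o\<^sub>L Df x)) (at x)" for x
    using diff_chain_at[OF Df(1) Dg(1)] by (simp add: blinfun_compose.rep_eq)
  moreover have "continuous_on UNIV (\<lambda>x. Dg (f x) o\<^sub>L Df x)"
    by (intro continuous_intros continuous_on_compose2[OF Dg(2) f_cont] Df(2)) auto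
  ultimately show ?thesis
    unfolding C1_map_def by (intro exI[of _ "\<lambda>x. Dg (f x) o\<^sub>L Df x"]) blast
qed

lemma diffeomorphism_id: "diffeomorphism (id :: 'a::euclidean_space \<Rightarrow> 'a)"
  unfolding diffeomorphism_def using C1_map_id by (intro exI[of _ id]) auto

lemma diffeomorphism_compose:
  fixes f g :: "'a::euclidean_space \<Rightarrow> 'a"
  assumes "diffeomorphism f" "diffeomorphism g"
  shows "diffeomorphism (g \<circ> f)"
proof -
  obtain hf where "\<forall>x. hf (f x) = x" "\<forall>y. f (hf y) = y" "C1_map f" "C1_map hf"
    using assms(1) unfolding diffeomorphism_def by blast
  moreover obtain hg where "\<forall>x. hg (g x) = x" "\<forall>y. g (hg y) = y" "C1_map g" "C1_map hg"
    using assms(2) unfolding diffeomorphism_def by blast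
  ultimately show ?thesis
    unfolding diffeomorphism_def by (intro exI[of _ "hf \<circ> hg"]) (auto intro: C1_map_compose)
qed

lemma has_derivative_norm_le_lipschitz:
  fixes k :: "'a::real_normed_vector \<Rightarrow> 'b::real_normed_vector"
  assumes deriv: "(k has_derivative D) (at x)"
    and lip: "\<And>y. norm (k y - k x) \<le> c * norm (y - x)"
  shows "norm (D v) \<le> c * norm v"
proof -
  interpret D: bounded_linear D
    using deriv has_derivative_bounded_linear by blast
  have "norm (D v) \<le> c * norm v" if "v \<noteq> 0"
  proof (rule field_le_epsilon)
    fix e :: real assume "e > 0"
    then have "e / norm v > 0"
      using that by simp
    then obtain d where "d > 0" and d: "\<And>y. norm (y - x) < d \<Longrightarrow>
        norm (k y - k x - D (y - x)) \<le> (e / norm v) * norm (y - x)"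
      using deriv unfolding has_derivative_at_alt by blast
    define t where "t = d / (2 * norm v)"
    have "t > 0" "t * norm v < d"
      using \<open>d > 0\<close> that by (simp_all add: t_def)
    have "t * norm (D v) = norm (D (t *\<^sub>R v))"
      using \<open>t > 0\<close> by (simp add: D.scaleR)
    also have "\<dots> \<le> norm (k (x + t *\<^sub>R v) - k x) + norm (k (x + t *\<^sub>R v) - k x - D (t *\<^sub>R v))"
      using norm_triangle_sub[of "D (t *\<^sub>R v)" "k (x + t *\<^sub>R v) - k x"]
      by (simp add: norm_minus_commute)
    also have "\<dots> \<le> c * (t * norm v) + (e / norm v) * (t * norm v)"
      using lip[of "x + t *\<^sub>R v"] d[of "x + t *\<^sub>R v"] \<open>t > 0\<close> \<open>t * norm v < d\<close>
      by (intro add_mono) auto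
    also have "\<dots> = t * (c * norm v + e)"
      using that by (simp add: field_simps)
    finally show "norm (D v) \<le> c * norm v + e"
      using \<open>t > 0\<close> by simp
  qed
  then show ?thesis
    using D.zero by (cases "v = 0") auto
qed

lemma blinfun_inverse_of_norm_lower_bound:
  fixes A :: "'a::euclidean_space \<Rightarrow>\<^sub>L 'a"
  assumes "0 < m" and lower: "\<And>v. m * norm v \<le> norm (A v)"
  obtains M :: "'a \<Rightarrow>\<^sub>L 'a" where "\<And>v. M (A v) = v" and "\<And>w. A (M w) = w"
proof -
  have lin: "linear (blinfun_apply A)"
    using blinfun.bounded_linear_right bounded_linear.linear by blast
  have "inj (blinfun_apply A)"
  proof (rule injI)
    fix a b assume "A a = A b"
    then have "m * norm (a - b) \<le> 0"
      using lower[of "a - b"] by (simp add: blinfun.diff_right)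
    then show "a = b"
      using \<open>0 < m\<close> by (simp add: mult_le_0_iff)
  qed
  then obtain g where g: "linear g" "g \<circ> blinfun_apply A = id"
    using linear_injective_left_inverse[OF lin] by blast
  then have "blinfun_apply A \<circ> g = id"
    using eucl.linear_inverse_left[OF lin g(1)] by simp
  moreover have "bounded_linear g"
    using g(1) linear_conv_bounded_linear by blast
  ultimately show ?thesis
    using g that[of "Blinfun g"] by (simp add: bounded_linear_Blinfun_apply fun_eq_iff)
qed

lemma continuous_on_blinfun_inverse:
  fixes A M :: "'c::metric_space \<Rightarrow> 'a::real_normed_vector \<Rightarrow>\<^sub>L 'a"
  assumes A_cont: "continuous_on S A" and "0 < m"
    and lower: "\<And>x v. x \<in> S \<Longrightarrow> m * norm v \<le> norm (A x v)"
    and left_inv: "\<And>x v. x \<in> S \<Longrightarrow> M x (A x v) = v"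
    and right_inv: "\<And>x w. x \<in> S \<Longrightarrow> A x (M x w) = w"
  shows "continuous_on S M"
proof -
  have M_bound: "norm (M x w) \<le> norm w / m" if "x \<in> S" for x w
    using lower[OF that, of "M x w"] \<open>0 < m\<close> by (simp add: right_inv[OF that] field_simps)
  have M_diff: "norm (M y - M x) \<le> norm (A y - A x) / m\<^sup>2" if "x \<in> S" "y \<in> S" for x y
  proof (rule norm_blinfun_bound)
    fix w
    have "norm ((A x - A y) (M x w)) \<le> norm (A x - A y) * (norm w / m)"
      using norm_blinfun[of "A x - A y" "M x w"]
        mult_left_mono[OF M_bound[OF that(1)], of "norm (A x - A y)" w]
      by simp
    then have "norm (M y ((A x - A y) (M x w))) \<le> norm (A x - A y) * (norm w / m) / m"
      using M_bound[OF that(2)] \<open>0 < m\<close> by (meson divide_right_mono less_imp_le order_trans)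
    \<comment> \<open>resolvent identity \<open>M y - M x = M y (A x - A y) M x\<close>\<close>
    moreover have "M y ((A x - A y) (M x w)) = M y w - M x w"
      using that by (simp add: blinfun.diff_left blinfun.diff_right left_inv right_inv)
    ultimately have "norm (M y w - M x w) \<le> norm (A x - A y) * (norm w / m) / m"
      by simp
    then show "norm ((M y - M x) w) \<le> norm (A y - A x) / m\<^sup>2 * norm w"
      by (simp add: blinfun.diff_left norm_minus_commute power2_eq_square)
  qed simp
  show ?thesis
    unfolding continuous_on_iff
  proof (intro ballI allI impI)
    fix x e assume "x \<in> S" "0 < (e::real)"
    then have "0 < e * m\<^sup>2"
      using \<open>0 < m\<close> by simp
    then obtain d where "d > 0" and d: "\<And>y. y \<in> S \<Longrightarrow> dist y x < d \<Longrightarrow> dist (A y) (A x) < e * m\<^sup>2"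
      using A_cont \<open>x \<in> S\<close> unfolding continuous_on_iff by blast
    have "dist (M y) (M x) < e" if "y \<in> S" "dist y x < d" for y
    proof -
      have "dist (M y) (M x) \<le> dist (A y) (A x) / m\<^sup>2"
        using M_diff[OF \<open>x \<in> S\<close> \<open>y \<in> S\<close>] by (simp add: dist_norm)
      also have "\<dots> < e"
        using d[OF that] \<open>0 < m\<close> by (simp add: pos_divide_less_eq)
      finally show ?thesis .
    qed
    then show "\<exists>d>0. \<forall>y\<in>S. dist y x < d \<longrightarrow> dist (M y) (M x) < e"
      using \<open>d > 0\<close> by blast
  qed
qed

lemma minus_contraction_inverse:
  fixes k :: "'a::banach \<Rightarrow> 'a"
  assumes c: "0 \<le> c" "c < 1" and lip: "\<And>x y. norm (k x - k y) \<le> c * norm (x - y)"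
  obtains h where "\<And>y. h y - k (h y) = y" and "\<And>x. h (x - k x) = x"
    and "(1 / (1 - c))-lipschitz_on UNIV h"
proof -
  have lower: "(1 - c) * norm (a - b) \<le> norm ((a - k a) - (b - k b))" for a b
    using norm_triangle_ineq[of "(a - k a) - (b - k b)" "k a - k b"] lip[of a b]
    by (simp add: algebra_simps)
  have "\<exists>x. x - k x = y" for y
  proof -
    obtain x where "y + k x = x"
      using banach_fix_type[OF c, of "\<lambda>x. y + k x"] lip by (auto simp: dist_norm)
    then show ?thesis
      by (metis add_diff_cancel_right')
  qed
  then obtain h where h: "\<And>y. h y - k (h y) = y"
    by metis
  moreover have "h (x - k x) = x" for x
    using lower[of "h (x - k x)" x] c by (simp add: h mult_le_0_iff)
  moreover have "(1 / (1 - c))-lipschitz_on UNIV h"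
  proof (rule lipschitz_onI)
    fix y y'
    have "(1 - c) * dist (h y) (h y') \<le> dist y y'"
      using lower[of "h y" "h y'"] by (simp add: h dist_norm)
    then show "dist (h y) (h y') \<le> 1 / (1 - c) * dist y y'"
      using c by (simp add: field_simps)
  qed (use c in simp)
  ultimately show ?thesis
    using that by blast
qed

lemma diffeomorphism_minus_contraction:
  fixes k :: "'a::euclidean_space \<Rightarrow> 'a" and K :: "'a \<Rightarrow> 'a \<Rightarrow>\<^sub>L 'a"
  assumes deriv: "\<And>x. (k has_derivative blinfun_apply (K x)) (at x)"
    and K_cont: "continuous_on UNIV K"
    and c: "0 \<le> c" "c < 1"
    and lip: "\<And>x y. norm (k x - k y) \<le> c * norm (x - y)"
  shows "diffeomorphism (\<lambda>x. x - k x)"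
proof -
  define A where "A x = id_blinfun - K x" for x
  have A_apply: "A x v = v - K x v" for x v
    by (simp add: A_def blinfun.diff_left)
  have A_lower: "(1 - c) * norm v \<le> norm (A x v)" for x v
    using norm_triangle_ineq[of "A x v" "K x v"]
      has_derivative_norm_le_lipschitz[OF deriv, of x c v] lip
    by (simp add: A_apply algebra_simps)
  have A_cont: "continuous_on UNIV A"
    unfolding A_def by (intro continuous_intros K_cont)
  have "0 < 1 - c"
    using c by simp
  have "\<exists>Mx :: 'a \<Rightarrow>\<^sub>L 'a. (\<forall>v. Mx (A x v) = v) \<and> (\<forall>w. A x (Mx w) = w)" for x
    by (rule blinfun_inverse_of_norm_lower_bound[OF \<open>0 < 1 - c\<close> A_lower]) blast
  then obtain M :: "'a \<Rightarrow> 'a \<Rightarrow>\<^sub>L 'a" where M: "\<And>x v. M x (A x v) = v" "\<And>x w. A x (M x w) = w"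
    by metis
  have M_cont: "continuous_on UNIV M"
    using continuous_on_blinfun_inverse[OF A_cont \<open>0 < 1 - c\<close> A_lower] M by blast
  obtain h where h: "\<And>y. h y - k (h y) = y" "\<And>x. h (x - k x) = x"
    and "(1 / (1 - c))-lipschitz_on UNIV h"
    using minus_contraction_inverse[OF c lip] by blast
  then have h_cont: "continuous_on UNIV h"
    using lipschitz_on_continuous_on by blast
  have deriv_minus: "((\<lambda>x. x - k x) has_derivative blinfun_apply (A x)) (at x)" for x
    using deriv[of x] by (auto intro!: derivative_eq_intros simp: A_apply fun_eq_iff)
  have "(h has_derivative blinfun_apply (M (h y))) (at y)" for y
    by (rule has_derivative_inverse_basic[OF deriv_minus, where T = UNIV])
      (use h h_cont in \<open>auto simp: M fun_eq_iff continuous_on_eq_continuous_at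
        blinfun.bounded_linear_right\<close>)
  then have "C1_map h"
    unfolding C1_map_def
    by (intro exI[of _ "\<lambda>y. M (h y)"]) (auto intro: continuous_on_compose2[OF M_cont h_cont])
  moreover have "C1_map (\<lambda>x. x - k x)"
    unfolding C1_map_def using deriv_minus A_cont by (intro exI[of _ A]) blast
  ultimately show ?thesis
    unfolding diffeomorphism_def using h by blast
qed

lemma bounded_linear_block_projection:
  "bounded_linear (\<lambda>v::real^'n. \<chi> i. if i \<in> I then v $ i else 0)"
  by (intro linear_conv_bounded_linear[THEN iffD1] linearI) (auto simp: vec_eq_iff)

lemma norm_block_projection_le: "norm (\<chi> i. if i \<in> I then v $ i else 0 :: real^'n) \<le> norm v"
  unfolding norm_vec_def by (rule L2_set_mono) auto

lemma diffeomorphism_block_step: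
  fixes gradf :: "real^'n \<Rightarrow> real^'n" and H :: "real^'n \<Rightarrow> ((real^'n) \<Rightarrow>\<^sub>L (real^'n))"
  assumes hess: "\<And>x. (gradf has_derivative blinfun_apply (H x)) (at x)"
    and hess_cont: "continuous_on UNIV H"
    and lipschitz: "\<And>x y. norm (gradf x - gradf y) \<le> L * norm (x - y)"
    and "0 \<le> L" "0 < \<alpha>" "\<alpha> * L < 1"
  shows "diffeomorphism (block_step \<alpha> gradf I)"
proof -
  define P where "P v = (\<chi> i. if i \<in> I then v $ i else 0)" for v :: "real^'n"
  interpret P: bounded_linear P
    unfolding P_def[abs_def] by (rule bounded_linear_block_projection)
  define k where "k x = \<alpha> *\<^sub>R P (gradf x)" for x
  define K where "K x = \<alpha> *\<^sub>R (Blinfun P o\<^sub>L H x)" for x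
  have deriv: "(k has_derivative blinfun_apply (K x)) (at x)" for x
  proof -
    have "(k has_derivative (\<lambda>v. \<alpha> *\<^sub>R P (H x v))) (at x)"
      unfolding k_def by (intro has_derivative_scaleR_right P.has_derivative hess)
    moreover have "blinfun_apply (K x) = (\<lambda>v. \<alpha> *\<^sub>R P (H x v))"
      by (simp add: K_def fun_eq_iff blinfun.scaleR_left
          bounded_linear_Blinfun_apply[OF P.bounded_linear_axioms])
    ultimately show ?thesis
      by simp
  qed
  have K_cont: "continuous_on UNIV K"
    unfolding K_def by (intro continuous_intros hess_cont)
  have lip: "norm (k x - k y) \<le> (\<alpha> * L) * norm (x - y)" for x y
  proof -
    have "norm (k x - k y) = \<alpha> * norm (P (gradf x - gradf y))"
      using \<open>0 < \<alpha>\<close> by (simp add: k_def P.diff flip: scaleR_diff_right)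
    also have "\<dots> \<le> \<alpha> * norm (gradf x - gradf y)"
      using \<open>0 < \<alpha>\<close> norm_block_projection_le by (simp add: P_def)
    also have "\<dots> \<le> \<alpha> * (L * norm (x - y))"
      using \<open>0 < \<alpha>\<close> lipschitz by simp
    finally show ?thesis
      by simp
  qed
  have "block_step \<alpha> gradf I = (\<lambda>x. x - k x)"
    by (auto simp: fun_eq_iff block_step_def k_def P_def)
  moreover have "diffeomorphism (\<lambda>x. x - k x)"
    using \<open>0 \<le> L\<close> \<open>0 < \<alpha>\<close> \<open>\<alpha> * L < 1\<close>
    by (intro diffeomorphism_minus_contraction[OF deriv K_cont _ _ lip]) simp_all
  ultimately show ?thesis
    by simp
qed

lemma block_map_Suc:
  "block_map \<alpha> gradf (Suc p) B = block_step \<alpha> gradf (B p) \<circ> block_map \<alpha> gradf p B"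
  unfolding block_map_def by simp

text \<open>Every block step is a diffeomorphism on its own.\<close>

theorem proposition1:
  fixes f :: "real^'n \<Rightarrow> real"
    and gradf :: "real^'n \<Rightarrow> real^'n"
    and H :: "real^'n \<Rightarrow> ((real^'n) \<Rightarrow>\<^sub>L (real^'n))"
    and L \<alpha> :: real and p :: nat and B :: "nat \<Rightarrow> 'n set"
  assumes grad: "\<And>x. (f has_derivative (\<lambda>h. gradf x \<bullet> h)) (at x)"
    and hess: "\<And>x. (gradf has_derivative blinfun_apply (H x)) (at x)"
    and hess_cont: "continuous_on UNIV H"
    and L_pos: "L > 0"
    and lipschitz: "\<And>x y. norm (gradf x - gradf y) \<le> L * norm (x - y)"
    and blocks_disj: "\<And>s t. s < p \<Longrightarrow> t < p \<Longrightarrow> s \<noteq> t \<Longrightarrow> B s \<inter> B t = {}"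
    and blocks_cover: "(\<Union>s<p. B s) = UNIV"
    and blocks_nonempty: "\<And>s. s < p \<Longrightarrow> B s \<noteq> {}"
    and step: "0 < \<alpha>" "\<alpha> < 1 / L"
  shows "diffeomorphism (block_map \<alpha> gradf p B)"
proof -
  have "\<alpha> * L < 1"
    using step L_pos by (simp add: field_simps)
  show ?thesis
  proof (induction p)
    case 0
    show ?case
      using diffeomorphism_id by (simp add: block_map_def id_def)
  next
    case (Suc p)
    then show ?case
      unfolding block_map_Suc
      using L_pos step(1) \<open>\<alpha> * L < 1\<close>
      by (intro diffeomorphism_compose diffeomorphism_block_step[OF hess hess_cont lipschitz]) simp_all
  qed
qed

end
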